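(* Let $\sigma=(g_1,\dots,g_T)\in\Sigma$ and $t\in[T]$. Let $\lambda_{t-1}$ and $\lambda_t$ be the optimal Lagrange multipliers associated with the inventory constraint of the offline problems for $\sigma^{[1:t-1]}$ and $\sigma^{[1:t]}$ respectively (with $\lambda_0=0$), and let $\tilde v_t$ be the $t$-th coordinate of an optimal solution of the offline problem for $\sigma^{[1:t]}$. Then $$\eta_{OPT}(\sigma^{[1:t]})-\eta_{OPT}(\sigma^{[1:t-1]})\ \ge\ g_t(\tilde v_t)-\lambda_t\tilde v_t,$$ and $$\eta_{OPT}(\sigma^{[1:t]})-\eta_{OPT}(\sigma^{[1:t-1]})\ \le\ g_t(\tilde v_t)-\lambda_{t-1}\tilde v_t\ \le\ g_t(\hat v_t),$$ where $\hat v_t$ is a maximizer of $g_t$ over $[0,\Delta]$.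
   Context: Fix $\Delta>0$ and $0<m\le M$. Let $\mathcal G$ be the family of all functions $g:[0,\Delta]\to\mathbb{R}$ that are concave, increasing and differentiable on $[0,\Delta]$ with $g(0)=0$ and $g'(0)\in[m,M]$. An input is a finite sequence $\sigma=(g_1,\dots,g_T)$, $T\ge1$, $g_t\in\mathcal G$; $\Sigma$ is the set of all inputs. For $0\le t\le T$, $\sigma^{[1:t]}=(g_1,\dots,g_t)$ ($\sigma^{[1:0]}$ is empty). For a finite sequence $(g_1,\dots,g_t)$, the offline problem is $\max\sum_{\tau=1}^t g_\tau(v_\tau)$ subject to $\sum_{\tau=1}^t v_\tau\le\Delta$ and $v_\tau\ge0$, and $\eta_{OPT}(\sigma^{[1:t]})$ denotes its optimal value; $\eta_{OPT}$ of the empty sequence is $0$. The inventory constraint is the constraint $\sum_\tau v_\tau\le\Delta$. *)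

theory Defs
  imports "HOL-Analysis.Analysis"
begin

definition inG :: "real \<Rightarrow> real \<Rightarrow> real \<Rightarrow> (real \<Rightarrow> real) \<Rightarrow> bool" where
  "inG \<Delta> m M g \<longleftrightarrow>
     concave_on {0..\<Delta>} g \<and>
     mono_on {0..\<Delta>} g \<and>
     (\<forall>x\<in>{0..\<Delta>}. g differentiable (at x within {0..\<Delta>})) \<and>
     g 0 = 0 \<and>
     (\<exists>D. (g has_real_derivative D) (at 0 within {0..\<Delta>}) \<and> m \<le> D \<and> D \<le> M)"

(* Decision vectors are v :: nat \<Rightarrow> real; coordinate i (0-based) belongs to gs ! i. *)
definition feasible :: "real \<Rightarrow> (real \<Rightarrow> real) list \<Rightarrow> (nat \<Rightarrow> real) \<Rightarrow> bool" where
  "feasible \<Delta> gs v \<longleftrightarrow> (\<forall>i<length gs. 0 \<le> v i) \<and> (\<Sum>i<length gs. v i) \<le> \<Delta>"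

definition objective :: "(real \<Rightarrow> real) list \<Rightarrow> (nat \<Rightarrow> real) \<Rightarrow> real" where
  "objective gs v = (\<Sum>i<length gs. (gs ! i) (v i))"

definition eta_OPT :: "real \<Rightarrow> (real \<Rightarrow> real) list \<Rightarrow> real" where
  "eta_OPT \<Delta> gs = Sup {objective gs v | v. feasible \<Delta> gs v}"

definition opt_solution :: "real \<Rightarrow> (real \<Rightarrow> real) list \<Rightarrow> (nat \<Rightarrow> real) \<Rightarrow> bool" where
  "opt_solution \<Delta> gs v \<longleftrightarrow> feasible \<Delta> gs v \<and> objective gs v = eta_OPT \<Delta> gs"

definition lagrangian :: "real \<Rightarrow> (real \<Rightarrow> real) list \<Rightarrow> real \<Rightarrow> (nat \<Rightarrow> real) \<Rightarrow> real" where
  "lagrangian \<Delta> gs lam v = objective gs v - lam * ((\<Sum>i<length gs. v i) - \<Delta>)"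

(* optimal Lagrange multiplier of the inventory constraint (no duality gap):
   lam \<ge> 0 and eta_OPT = sup over the domain of the Lagrangian *)
definition opt_multiplier :: "real \<Rightarrow> (real \<Rightarrow> real) list \<Rightarrow> real \<Rightarrow> bool" where
  "opt_multiplier \<Delta> gs lam \<longleftrightarrow> 0 \<le> lam \<and>
     eta_OPT \<Delta> gs = (SUP v\<in>{v. \<forall>i<length gs. v i \<in> {0..\<Delta>}}. lagrangian \<Delta> gs lam v)"

end

theory Submission
  imports Defs
begin

text \<open>Write \<open>\<sigma>\<^sup>[1:t]\<close> as \<open>ps @ [g]\<close>. For the lower bound, pad any feasible solution of
  \<open>ps\<close> with an arbitrary amount \<open>x \<in> [0,\<Delta>]\<close> for \<open>g\<close>: by weak duality for the multiplier
  \<open>\<lambda>\<^sub>t\<close> of \<open>ps @ [g]\<close>, the Lagrangian of the padded vector is at most \<open>\<eta>(ps @ [g])\<close>, while the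
  inventory term costs at most \<open>\<lambda>\<^sub>t x\<close> more than for the unpadded one. For the upper bound,
  restrict the optimal solution \<open>\<tilde>v\<close> of \<open>ps @ [g]\<close> to \<open>ps\<close>: its slack is at least \<open>\<tilde>v\<^sub>t\<close>, so
  weak duality for the multiplier \<open>\<lambda>\<^sub>t\<^sub>-\<^sub>1\<close> of \<open>ps\<close> bounds its objective by
  \<open>\<eta>(ps) - \<lambda>\<^sub>t\<^sub>-\<^sub>1 \<tilde>v\<^sub>t\<close>. Monotonicity of the \<open>g\<^sub>i\<close> is only needed to make the Lagrangian bounded.\<close>

lemma objective_snoc: "objective (ps @ [g]) v = objective ps v + g (v (length ps))"
  unfolding objective_def by (simp add: nth_append)

lemma objective_cong:
  assumes "\<And>i. i < length ps \<Longrightarrow> v i = w i"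
  shows "objective ps v = objective ps w"
  unfolding objective_def using assms by (intro sum.cong) auto

lemma feasible_in_box:
  assumes "feasible \<Delta> gs v" "i < length gs"
  shows "v i \<in> {0..\<Delta>}"
proof -
  have "0 \<le> v i" using assms unfolding feasible_def by auto
  moreover have "v i \<le> (\<Sum>j<length gs. v j)"
    using assms unfolding feasible_def by (intro member_le_sum) auto
  ultimately show ?thesis using assms(1) unfolding feasible_def by auto
qed

lemma eta_OPT_Nil:
  assumes "0 \<le> \<Delta>"
  shows "eta_OPT \<Delta> [] = 0"
proof -
  have "{objective [] v |v. feasible \<Delta> [] v} = {0}"
    using assms by (auto simp: objective_def feasible_def)
  then show ?thesis by (simp add: eta_OPT_def)
qed

lemma opt_multiplier_Nil:
  assumes "0 \<le> \<Delta>"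
  shows "opt_multiplier \<Delta> [] 0"
  using assms by (simp add: opt_multiplier_def lagrangian_def objective_def eta_OPT_Nil)

lemma bdd_above_lagrangian:
  assumes "\<forall>g\<in>set gs. mono_on {0..\<Delta>} g" "0 \<le> lam" "0 \<le> \<Delta>"
  shows "bdd_above (lagrangian \<Delta> gs lam ` {v. \<forall>i<length gs. v i \<in> {0..\<Delta>}})"
proof (rule bdd_aboveI2)
  fix v assume v: "v \<in> {v. \<forall>i<length gs. v i \<in> {0..\<Delta>}}"
  have "objective gs v \<le> (\<Sum>i<length gs. (gs ! i) \<Delta>)"
    unfolding objective_def
    using assms v by (intro sum_mono) (auto simp: mono_on_def)
  moreover have "0 \<le> lam * (\<Sum>i<length gs. v i)"
    using assms(2) v by (intro mult_nonneg_nonneg sum_nonneg) auto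
  ultimately show "lagrangian \<Delta> gs lam v \<le> (\<Sum>i<length gs. (gs ! i) \<Delta>) + lam * \<Delta>"
    unfolding lagrangian_def by (simp add: algebra_simps)
qed

lemma lagrangian_le_eta_OPT:
  assumes "opt_multiplier \<Delta> gs lam" "\<forall>g\<in>set gs. mono_on {0..\<Delta>} g" "0 \<le> \<Delta>"
    and "\<forall>i<length gs. v i \<in> {0..\<Delta>}"
  shows "lagrangian \<Delta> gs lam v \<le> eta_OPT \<Delta> gs"
  using assms bdd_above_lagrangian[of gs \<Delta> lam]
  unfolding opt_multiplier_def by (auto intro: cSUP_upper)

lemma eta_OPT_snoc_ge:
  assumes "0 \<le> \<Delta>" and mono: "\<forall>h\<in>set (ps @ [g]). mono_on {0..\<Delta>} h"
    and lam: "opt_multiplier \<Delta> (ps @ [g]) lam" and x: "x \<in> {0..\<Delta>}"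
  shows "eta_OPT \<Delta> ps + g x - lam * x \<le> eta_OPT \<Delta> (ps @ [g])"
proof -
  have "eta_OPT \<Delta> ps \<le> eta_OPT \<Delta> (ps @ [g]) - g x + lam * x"
    unfolding eta_OPT_def[of \<Delta> ps]
  proof (rule cSup_least)
    show "{objective ps v |v. feasible \<Delta> ps v} \<noteq> {}"
      using assms(1) by (auto simp: feasible_def intro!: exI[of _ "\<lambda>_. 0"])
  next
    fix y assume "y \<in> {objective ps v |v. feasible \<Delta> ps v}"
    then obtain w where y: "y = objective ps w" and w: "feasible \<Delta> ps w" by auto
    define v where "v = w(length ps := x)"
    have "\<forall>i<length (ps @ [g]). v i \<in> {0..\<Delta>}"
      using feasible_in_box[OF w] x by (auto simp: v_def less_Suc_eq)
    then have "lagrangian \<Delta> (ps @ [g]) lam v \<le> eta_OPT \<Delta> (ps @ [g])"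
      using lagrangian_le_eta_OPT[OF lam mono assms(1)] by blast
    moreover have "objective ps v = objective ps w"
      by (rule objective_cong) (simp add: v_def)
    then have "lagrangian \<Delta> (ps @ [g]) lam v
        = objective ps w + g x - lam * ((\<Sum>i<length ps. w i) + x - \<Delta>)"
      unfolding lagrangian_def objective_snoc by (simp add: v_def)
    moreover have "lam * ((\<Sum>i<length ps. w i) - \<Delta>) \<le> 0"
      using lam w by (intro mult_nonneg_nonpos) (auto simp: opt_multiplier_def feasible_def)
    ultimately show "y \<le> eta_OPT \<Delta> (ps @ [g]) - g x + lam * x"
      using y by (simp add: algebra_simps)
  qed
  then show ?thesis by simp
qed

lemma objective_restrict_le_eta_OPT:
  assumes "0 \<le> \<Delta>" and mono: "\<forall>h\<in>set ps. mono_on {0..\<Delta>} h"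
    and lam: "opt_multiplier \<Delta> ps lam" and v: "feasible \<Delta> (ps @ [g]) v"
  shows "objective ps v + lam * v (length ps) \<le> eta_OPT \<Delta> ps"
proof -
  have "\<forall>i<length ps. v i \<in> {0..\<Delta>}"
    using feasible_in_box[OF v] by simp
  then have "lagrangian \<Delta> ps lam v \<le> eta_OPT \<Delta> ps"
    using lagrangian_le_eta_OPT[OF lam mono assms(1)] by blast
  moreover have "v (length ps) \<le> \<Delta> - (\<Sum>i<length ps. v i)"
    using v by (simp add: feasible_def)
  then have "lam * v (length ps) \<le> lam * (\<Delta> - (\<Sum>i<length ps. v i))"
    using lam by (intro mult_left_mono) (auto simp: opt_multiplier_def)
  ultimately show ?thesis unfolding lagrangian_def by (simp add: algebra_simps)
qed

theorem lemma2:
  fixes \<Delta> m M :: real and \<sigma> :: "(real \<Rightarrow> real) list" and t :: nat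
    and lam_prev lam_t v_hat :: real and v_tilde :: "nat \<Rightarrow> real"
  assumes "0 < \<Delta>" and "0 < m" and "m \<le> M"
    and "\<sigma> \<noteq> []" and "\<forall>g\<in>set \<sigma>. inG \<Delta> m M g"
    and "1 \<le> t" and "t \<le> length \<sigma>"
    and "if t = 1 then lam_prev = 0 else opt_multiplier \<Delta> (take (t - 1) \<sigma>) lam_prev"
    and "opt_multiplier \<Delta> (take t \<sigma>) lam_t"
    and "opt_solution \<Delta> (take t \<sigma>) v_tilde"
    and "v_hat \<in> {0..\<Delta>}" and "\<forall>x\<in>{0..\<Delta>}. (\<sigma> ! (t - 1)) x \<le> (\<sigma> ! (t - 1)) v_hat"
  shows "eta_OPT \<Delta> (take t \<sigma>) - eta_OPT \<Delta> (take (t - 1) \<sigma>)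
           \<ge> (\<sigma> ! (t - 1)) (v_tilde (t - 1)) - lam_t * v_tilde (t - 1)
       \<and> eta_OPT \<Delta> (take t \<sigma>) - eta_OPT \<Delta> (take (t - 1) \<sigma>)
           \<le> (\<sigma> ! (t - 1)) (v_tilde (t - 1)) - lam_prev * v_tilde (t - 1)
       \<and> (\<sigma> ! (t - 1)) (v_tilde (t - 1)) - lam_prev * v_tilde (t - 1)
           \<le> (\<sigma> ! (t - 1)) v_hat"
proof -
  define ps where "ps = take (t - 1) \<sigma>"
  define g where "g = \<sigma> ! (t - 1)"
  have split: "take t \<sigma> = ps @ [g]" and len: "length ps = t - 1"
    using assms(6,7) take_Suc_conv_app_nth[of "t - 1" \<sigma>] by (auto simp: ps_def g_def)
  have mono: "\<forall>h\<in>set (ps @ [g]). mono_on {0..\<Delta>} h"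
    using assms(5) unfolding split[symmetric] inG_def by (meson in_set_takeD)
  have lam_prev: "opt_multiplier \<Delta> ps lam_prev"
    using assms(1,6,8) opt_multiplier_Nil by (cases "t = 1") (auto simp: ps_def)
  have v_tilde: "feasible \<Delta> (ps @ [g]) v_tilde"
    and eta: "eta_OPT \<Delta> (ps @ [g]) = objective ps v_tilde + g (v_tilde (t - 1))"
    using assms(10) by (auto simp: opt_solution_def split objective_snoc len)
  have box: "v_tilde (t - 1) \<in> {0..\<Delta>}"
    using feasible_in_box[OF v_tilde, of "t - 1"] len by simp
  have "eta_OPT \<Delta> ps + g (v_tilde (t - 1)) - lam_t * v_tilde (t - 1) \<le> eta_OPT \<Delta> (ps @ [g])"
    using eta_OPT_snoc_ge[OF _ mono _ box] assms(1,9) split by simp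
  moreover have "objective ps v_tilde + lam_prev * v_tilde (t - 1) \<le> eta_OPT \<Delta> ps"
    using objective_restrict_le_eta_OPT[OF _ _ lam_prev v_tilde] assms(1) mono len by simp
  moreover have "0 \<le> lam_prev" using lam_prev by (simp add: opt_multiplier_def)
  ultimately show ?thesis
    using assms(12) box eta split unfolding g_def[symmetric] ps_def[symmetric]
    by (auto intro: order_trans[of _ "g (v_tilde (t - 1))"] simp: mult_nonneg_nonneg)
qed

end
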